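(* Let $m\ge1$, $\vec t=(t_1,\dots,t_m)$ with $t_1<\cdots<t_m$ real, and $\omega_0,\dots,\omega_m$ real with $\sum_{k=0}^\ell\omega_k\ge0$ for $\ell=0,\dots,m$, such that $w(x;\vec t)={\rm e}^{-x^2}\big(\omega_0+\sum_{k=1}^m\omega_k\theta(x-t_k)\big)$ is not identically zero. With $\mathcal L=\sum_{k=1}^m\partial/\partial t_k$ and $R_{n,k},r_{n,k}$ as in the context, for $n\ge1$ and $k=1,\dots,m$, $$\mathcal LR_{n,k}=\Big(\sum_{j=1}^mR_{n,j}-2t_k\Big)R_{n,k}+4r_{n,k},$$ and, where $R_{n,k}\ne0$, $$\mathcal Lr_{n,k}=\frac{2r_{n,k}^2}{R_{n,k}}-\Big(\sum_{j=1}^mr_{n,j}+n\Big)R_{n,k}.$$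
   Context: $\theta(y)=1$ for $y>0$ and $0$ otherwise. $P_n(z;\vec t)$ is the monic degree-$n$ polynomial orthogonal w.r.t. $w(\cdot;\vec t)$ on $\mathbb{R}$, $\int P_jP_kw\,dx=h_k\delta_{jk}$, $h_k>0$. For $k=1,\dots,m$: $R_{n,k}(\vec t):=\omega_k{\rm e}^{-t_k^2}P_n(t_k;\vec t)^2/h_n$ and $r_{n,k}(\vec t):=\omega_k{\rm e}^{-t_k^2}P_n(t_k;\vec t)P_{n-1}(t_k;\vec t)/h_{n-1}$. *)

theory Defs
  imports "HOL-Analysis.Analysis" "HOL-Computational_Algebra.Polynomial"
begin

definition theta :: "real \<Rightarrow> real" where
  "theta y = (if y > 0 then 1 else 0)"

text \<open>The weight w(x; t) = exp(-x^2) (omega_0 + sum_{k=1..m} omega_k theta(x - t_k)).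
  omega is indexed by 0..m, t by 1..m (other values are irrelevant).\<close>
definition weight :: "nat \<Rightarrow> (nat \<Rightarrow> real) \<Rightarrow> (nat \<Rightarrow> real) \<Rightarrow> real \<Rightarrow> real" where
  "weight m \<omega> t x = exp (- (x^2)) * (\<omega> 0 + (\<Sum>k=1..m. \<omega> k * theta (x - t k)))"

definition wip :: "nat \<Rightarrow> (nat \<Rightarrow> real) \<Rightarrow> (nat \<Rightarrow> real) \<Rightarrow> real poly \<Rightarrow> real poly \<Rightarrow> real" where
  "wip m \<omega> t p q = (LINT x|lborel. poly p x * poly q x * weight m \<omega> t x)"

definition OP :: "nat \<Rightarrow> (nat \<Rightarrow> real) \<Rightarrow> (nat \<Rightarrow> real) \<Rightarrow> nat \<Rightarrow> real poly" where
  "OP m \<omega> t n = (THE p. degree p = n \<and> lead_coeff p = 1 \<and>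
       (\<forall>q. degree q < n \<longrightarrow> wip m \<omega> t p q = 0))"

definition hn :: "nat \<Rightarrow> (nat \<Rightarrow> real) \<Rightarrow> (nat \<Rightarrow> real) \<Rightarrow> nat \<Rightarrow> real" where
  "hn m \<omega> t n = wip m \<omega> t (OP m \<omega> t n) (OP m \<omega> t n)"

definition Rnk :: "nat \<Rightarrow> (nat \<Rightarrow> real) \<Rightarrow> (nat \<Rightarrow> real) \<Rightarrow> nat \<Rightarrow> nat \<Rightarrow> real" where
  "Rnk m \<omega> t n k = \<omega> k * exp (- ((t k)^2)) * (poly (OP m \<omega> t n) (t k))^2 / hn m \<omega> t n"

definition rnk :: "nat \<Rightarrow> (nat \<Rightarrow> real) \<Rightarrow> (nat \<Rightarrow> real) \<Rightarrow> nat \<Rightarrow> nat \<Rightarrow> real" where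
  "rnk m \<omega> t n k = \<omega> k * exp (- ((t k)^2)) * poly (OP m \<omega> t n) (t k)
      * poly (OP m \<omega> t (n - 1)) (t k) / hn m \<omega> t (n - 1)"

end

theory Submission
  imports Defs "HOL-Probability.Distributions" "HOL-Real_Asymp.Real_Asymp"
begin

text \<open>
  For admissible data the weight \<open>w\<close> is nonnegative and positive on an interval, so the moment
  functional \<open>L f = \<integral> f w\<close> is positive definite and \<open>P\<^sub>n\<close> is its Gram-Schmidt polynomial.
  Moving one node \<open>t\<^sub>j\<close> changes \<open>L\<close> only through the tail integral over \<open>(t\<^sub>j, \<infinity>)\<close>, whose
  derivative is \<open>f \<mapsto> -\<omega>\<^sub>j exp(-t\<^sub>j\<^sup>2) f(t\<^sub>j)\<close>. Hence \<open>P\<^sub>n\<close> is differentiable in \<open>t\<^sub>j\<close>, its derivative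
  has degree below \<open>n\<close> and is determined by orthogonality, and
  \<open>\<partial>h\<^sub>n/\<partial>t\<^sub>j = -\<omega>\<^sub>j exp(-t\<^sub>j\<^sup>2) P\<^sub>n(t\<^sub>j)\<^sup>2\<close>.
  Integration by parts gives \<open>L(f' - 2xf) = -\<nu> f\<close> with \<open>\<nu> f = \<Sum>\<^sub>k \<omega>\<^sub>k exp(-t\<^sub>k\<^sup>2) f(t\<^sub>k)\<close>; testing
  against polynomials of lower degree, this identifies the summed derivatives
  \<open>\<Sum>\<^sub>j \<partial>\<^sub>jP\<^sub>n + P\<^sub>n' = (2h\<^sub>n/h\<^sub>n\<^sub>-\<^sub>1) P\<^sub>n\<^sub>-\<^sub>1\<close> and
  \<open>\<Sum>\<^sub>j \<partial>\<^sub>jP\<^sub>n\<^sub>-\<^sub>1 + P\<^sub>n\<^sub>-\<^sub>1' = 2(xP\<^sub>n\<^sub>-\<^sub>1 - P\<^sub>n) - (\<nu>(P\<^sub>n\<^sub>-\<^sub>1\<^sup>2)/h\<^sub>n\<^sub>-\<^sub>1) P\<^sub>n\<^sub>-\<^sub>1\<close>,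
  and gives \<open>\<nu>(P\<^sub>n P\<^sub>n\<^sub>-\<^sub>1) = 2h\<^sub>n - n h\<^sub>n\<^sub>-\<^sub>1\<close>. The two formulas then follow from the product and
  quotient rules for \<open>\<Sum>\<^sub>k \<partial>/\<partial>t\<^sub>k\<close>.
\<close>

section \<open>Positive definite functionals and Gram-Schmidt\<close>

locale poly_functional =
  fixes L :: "real poly \<Rightarrow> real"
  assumes add: "L (p + q) = L p + L q"
    and smult: "L (smult c p) = c * L p"
begin

lemma zero [simp]: "L 0 = 0"
  using smult[of 0 0] by simp

lemma minus: "L (- p) = - L p"
  using smult[of "-1" p] by simp

lemma diff: "L (p - q) = L p - L q"
  using add[of p "- q"] minus[of q] by simp

lemma sum: "L (\<Sum>i\<in>S. F i) = (\<Sum>i\<in>S. L (F i))"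
  by (induction S rule: infinite_finite_induct) (auto simp: add)

lemma eq_sum_moments:
  assumes "degree f \<le> N"
  shows "L f = (\<Sum>i\<le>N. coeff f i * L (monom 1 i))"
proof -
  have "f = (\<Sum>i\<le>N. smult (coeff f i) (monom 1 i))"
    using poly_as_sum_of_monoms'[OF assms] by (simp add: smult_monom)
  then show ?thesis
    by (metis (no_types, lifting) sum smult sum.cong)
qed

end

fun gram_schmidt :: "(real poly \<Rightarrow> real) \<Rightarrow> nat \<Rightarrow> real poly" where
  "gram_schmidt L 0 = 1"
| "gram_schmidt L (Suc N) = monom 1 (Suc N) -
     (\<Sum>l\<le>N. smult (L (monom 1 (Suc N) * gram_schmidt L l) / L (gram_schmidt L l * gram_schmidt L l))
                (gram_schmidt L l))"

declare gram_schmidt.simps(2) [simp del]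

lemma degree_gram_schmidt_and_monic:
  "degree (gram_schmidt L N) = N \<and> coeff (gram_schmidt L N) N = 1"
proof (induction N rule: less_induct)
  case (less N)
  show ?case
  proof (cases N)
    case (Suc M)
    define r where "r = (\<Sum>l\<le>M. smult (L (monom 1 (Suc M) * gram_schmidt L l) /
                      L (gram_schmidt L l * gram_schmidt L l)) (gram_schmidt L l))"
    have "degree (gram_schmidt L l) \<le> M" if "l \<le> M" for l
      using less.IH[of l] that Suc by simp
    then have "degree r \<le> M"
      unfolding r_def by (intro degree_sum_le) auto
    then have "degree (monom (1::real) (Suc M) + - r) = Suc M"
      by (subst degree_add_eq_left) (simp_all add: degree_monom_eq)
    moreover have "coeff r (Suc M) = 0"
      using \<open>degree r \<le> M\<close> by (simp add: coeff_eq_0)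
    ultimately show ?thesis
      by (simp add: Suc r_def[symmetric] gram_schmidt.simps(2))
  qed simp
qed

lemma degree_gram_schmidt [simp]: "degree (gram_schmidt L N) = N"
  and coeff_gram_schmidt_degree [simp]: "coeff (gram_schmidt L N) N = 1"
  using degree_gram_schmidt_and_monic by blast+

lemma coeff_gram_schmidt_above: "N < i \<Longrightarrow> coeff (gram_schmidt L N) i = 0"
  by (simp add: coeff_eq_0)

lemma gram_schmidt_nonzero: "gram_schmidt L N \<noteq> 0"
  using coeff_gram_schmidt_degree[of L N] by force

locale posdef_poly_functional = poly_functional +
  assumes square_pos: "p \<noteq> 0 \<Longrightarrow> 0 < L (p * p)"
begin

lemma eq_0_if_orthogonal:
  assumes "\<forall>i\<ge>N. coeff E i = 0" and "\<And>q. \<forall>i\<ge>N. coeff q i = 0 \<Longrightarrow> L (E * q) = 0"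
  shows "E = 0"
proof (rule ccontr)
  assume "E \<noteq> 0"
  then have "0 < L (E * E)"
    by (rule square_pos)
  with assms show False
    by simp
qed

lemma gram_schmidt_orthogonal_lower:
  "l < N \<Longrightarrow> L (gram_schmidt L N * gram_schmidt L l) = 0"
proof (induction N arbitrary: l rule: less_induct)
  case (less N)
  then obtain M where N: "N = Suc M" by (cases N) auto
  let ?g = "gram_schmidt L"
  define c where "c l' = L (monom 1 N * ?g l') / L (?g l' * ?g l')" for l'
  have lM: "l \<le> M" using less.prems N by simp
  have off: "L (?g l' * ?g l) = 0" if "l' \<le> M" "l' \<noteq> l" for l'
    using that less.IH[of l' l] less.IH[of l l'] lM N by (cases "l < l'") (simp_all add: mult.commute)
  have "L (?g N * ?g l) = L (monom 1 N * ?g l) - (\<Sum>l'\<le>M. c l' * L (?g l' * ?g l))"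
    by (simp add: N c_def left_diff_distrib sum_distrib_right diff sum smult gram_schmidt.simps(2))
  also have "(\<Sum>l'\<le>M. c l' * L (?g l' * ?g l)) = c l * L (?g l * ?g l)"
    using lM off by (subst sum.remove[of _ l]) (auto intro!: sum.neutral)
  also have "c l * L (?g l * ?g l) = L (monom 1 N * ?g l)"
    using square_pos[OF gram_schmidt_nonzero[of L l]] by (simp add: c_def)
  finally show ?case by simp
qed

lemma gram_schmidt_orthogonal_below:
  "\<forall>i\<ge>d. coeff q i = 0 \<Longrightarrow> d \<le> N \<Longrightarrow> L (gram_schmidt L N * q) = 0"
proof (induction d arbitrary: q)
  case 0
  then have "q = 0" by (intro poly_eqI) simp
  then show ?case by simp
next
  case (Suc d)
  define r where "r = q - smult (coeff q d) (gram_schmidt L d)"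
  have "\<forall>i\<ge>d. coeff r i = 0"
  proof (intro allI impI)
    fix i assume "d \<le> i"
    then show "coeff r i = 0"
      using Suc.prems(1) by (cases "i = d") (auto simp: r_def coeff_gram_schmidt_above)
  qed
  then have "L (gram_schmidt L N * r) = 0"
    using Suc by simp
  moreover have "gram_schmidt L N * q
      = smult (coeff q d) (gram_schmidt L N * gram_schmidt L d) + gram_schmidt L N * r"
    by (simp add: r_def algebra_simps)
  ultimately show ?case
    using gram_schmidt_orthogonal_lower[of d N] Suc.prems(2) by (simp add: add smult)
qed

lemma gram_schmidt_orthogonal:
  "\<forall>i\<ge>N. coeff q i = 0 \<Longrightarrow> L (gram_schmidt L N * q) = 0"
  using gram_schmidt_orthogonal_below by blast

lemma gram_schmidt_leading:
  assumes "\<forall>i>N. coeff q i = 0"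
  shows "L (gram_schmidt L N * q) = coeff q N * L (gram_schmidt L N * gram_schmidt L N)"
proof -
  define r where "r = q - smult (coeff q N) (gram_schmidt L N)"
  have "\<forall>i\<ge>N. coeff r i = 0"
  proof (intro allI impI)
    fix i assume "N \<le> i"
    then show "coeff r i = 0"
      using assms by (cases "i = N") (auto simp: r_def coeff_gram_schmidt_above)
  qed
  then have "L (gram_schmidt L N * r) = 0"
    by (rule gram_schmidt_orthogonal)
  moreover have "gram_schmidt L N * q
      = smult (coeff q N) (gram_schmidt L N * gram_schmidt L N) + gram_schmidt L N * r"
    by (simp add: r_def algebra_simps)
  ultimately show ?thesis
    by (simp add: add smult)
qed

lemma gram_schmidt_unique:
  "(degree p = N \<and> lead_coeff p = 1 \<and> (\<forall>q. degree q < N \<longrightarrow> L (p * q) = 0))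
     \<longleftrightarrow> p = gram_schmidt L N"
proof
  assume p: "degree p = N \<and> lead_coeff p = 1 \<and> (\<forall>q. degree q < N \<longrightarrow> L (p * q) = 0)"
  define d where "d = p - gram_schmidt L N"
  have d_low: "\<forall>i\<ge>N. coeff d i = 0"
  proof (intro allI impI)
    fix i assume "N \<le> i"
    then show "coeff d i = 0"
      using p by (cases "i = N") (auto simp: d_def coeff_gram_schmidt_above coeff_eq_0)
  qed
  have "degree d < N" if "d \<noteq> 0"
    using d_low that by (metis leading_coeff_0_iff not_le)
  then have "L (p * d) = 0"
    using p by (cases "d = 0") auto
  moreover have "L (gram_schmidt L N * d) = 0"
    using gram_schmidt_orthogonal[OF d_low] .
  ultimately have "L (d * d) = 0"
    by (simp add: d_def left_diff_distrib diff)
  then show "p = gram_schmidt L N"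
    using square_pos[of d] by (auto simp: d_def)
next
  assume "p = gram_schmidt L N"
  then show "degree p = N \<and> lead_coeff p = 1 \<and> (\<forall>q. degree q < N \<longrightarrow> L (p * q) = 0)"
    by (auto intro!: gram_schmidt_orthogonal simp: coeff_eq_0)
qed

end

section \<open>Coefficientwise derivatives of polynomial families\<close>

lemma poly_eq_sum_coeff_le:
  fixes p :: "'a::comm_semiring_1 poly"
  assumes "degree p \<le> n"
  shows "poly p x = (\<Sum>i\<le>n. coeff p i * x ^ i)"
proof -
  have "poly p x = poly (\<Sum>i\<le>n. monom (coeff p i) i) x"
    using poly_as_sum_of_monoms'[OF assms] by simp
  then show ?thesis
    by (simp add: poly_sum poly_monom)
qed

lemma has_real_derivative_locally_zero:
  assumes "eventually (\<lambda>s. f s = 0) (nhds x)" and "(f has_real_derivative D) (at x)"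
  shows "D = 0"
proof -
  have "((\<lambda>s. 0::real) has_real_derivative D) (at x)"
    using assms(2) DERIV_cong_ev[OF refl assms(1) refl] by simp
  then show ?thesis
    using DERIV_const DERIV_unique by blast
qed

text \<open>Polynomials carry no norm here, so a polynomial-valued map is differentiated
  coefficientwise; the uniform degree bound turns evaluations and functionals into finite sums.\<close>

definition has_coeff_derivative :: "(real \<Rightarrow> real poly) \<Rightarrow> real poly \<Rightarrow> real \<Rightarrow> bool" where
  "has_coeff_derivative F F' s0 \<longleftrightarrow>
     (\<exists>N. (\<forall>s. degree (F s) \<le> N) \<and> degree F' \<le> N) \<and>
     (\<forall>i. ((\<lambda>s. coeff (F s) i) has_real_derivative coeff F' i) (at s0))"

lemma has_coeff_derivative_const: "has_coeff_derivative (\<lambda>s. p) 0 s0"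
  unfolding has_coeff_derivative_def by (auto intro!: exI[of _ "degree p"])

lemma has_coeff_derivative_coeff_const:
  assumes "has_coeff_derivative F F' s0" and "\<And>s. coeff (F s) i = c"
  shows "coeff F' i = 0"
proof -
  have "((\<lambda>s. coeff (F s) i) has_real_derivative coeff F' i) (at s0)"
    using assms(1) unfolding has_coeff_derivative_def by blast
  then have "((\<lambda>s. c) has_real_derivative coeff F' i) (at s0)"
    using assms(2) by simp
  then show ?thesis
    using DERIV_const DERIV_unique by blast
qed

lemma has_coeff_derivative_add:
  assumes "has_coeff_derivative F F' s0" and "has_coeff_derivative G G' s0"
  shows "has_coeff_derivative (\<lambda>s. F s + G s) (F' + G') s0"
proof -
  obtain N M where "\<forall>s. degree (F s) \<le> N" "degree F' \<le> N" "\<forall>s. degree (G s) \<le> M" "degree G' \<le> M"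
    using assms unfolding has_coeff_derivative_def by auto
  then have "(\<forall>s. degree (F s + G s) \<le> max N M) \<and> degree (F' + G') \<le> max N M"
    by (metis degree_add_le max.coboundedI1 max.coboundedI2)
  then show ?thesis
    using assms unfolding has_coeff_derivative_def by (auto intro!: derivative_intros)
qed

lemma has_coeff_derivative_minus:
  "has_coeff_derivative F F' s0 \<Longrightarrow> has_coeff_derivative (\<lambda>s. - F s) (- F') s0"
  unfolding has_coeff_derivative_def by (auto intro!: derivative_intros)

lemma has_coeff_derivative_diff:
  assumes "has_coeff_derivative F F' s0" and "has_coeff_derivative G G' s0"
  shows "has_coeff_derivative (\<lambda>s. F s - G s) (F' - G') s0"
  using has_coeff_derivative_add[OF assms(1) has_coeff_derivative_minus[OF assms(2)]] by simp

lemma has_coeff_derivative_sum: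
  "finite S \<Longrightarrow> (\<And>l. l \<in> S \<Longrightarrow> has_coeff_derivative (F l) (F' l) s0) \<Longrightarrow>
    has_coeff_derivative (\<lambda>s. \<Sum>l\<in>S. F l s) (\<Sum>l\<in>S. F' l) s0"
  by (induction S rule: finite_induct)
    (auto intro: has_coeff_derivative_add simp: has_coeff_derivative_const[of 0, simplified])

lemma has_coeff_derivative_smult:
  assumes "has_coeff_derivative F F' s0" and "(c has_real_derivative c') (at s0)"
  shows "has_coeff_derivative (\<lambda>s. smult (c s) (F s)) (smult (c s0) F' + smult c' (F s0)) s0"
proof -
  obtain N where "\<forall>s. degree (F s) \<le> N" "degree F' \<le> N"
    using assms(1) unfolding has_coeff_derivative_def by auto
  then have "(\<forall>s. degree (smult (c s) (F s)) \<le> N) \<and> degree (smult (c s0) F' + smult c' (F s0)) \<le> N"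
    by (metis degree_add_le degree_smult_le order_trans)
  moreover have "((\<lambda>s. coeff (smult (c s) (F s)) i) has_real_derivative
      coeff (smult (c s0) F' + smult c' (F s0)) i) (at s0)" for i
  proof -
    have "((\<lambda>s. c s * coeff (F s) i) has_real_derivative c' * coeff (F s0) i + c s0 * coeff F' i) (at s0)"
      using assms unfolding has_coeff_derivative_def by (auto intro!: derivative_eq_intros)
    then show ?thesis
      by (simp add: algebra_simps)
  qed
  ultimately show ?thesis
    unfolding has_coeff_derivative_def by blast
qed

lemma has_coeff_derivative_mult:
  assumes "has_coeff_derivative F F' s0" and "has_coeff_derivative G G' s0"
  shows "has_coeff_derivative (\<lambda>s. F s * G s) (F' * G s0 + F s0 * G') s0"
proof -
  obtain N M where "\<forall>s. degree (F s) \<le> N" "degree F' \<le> N" "\<forall>s. degree (G s) \<le> M" "degree G' \<le> M"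
    using assms unfolding has_coeff_derivative_def by auto
  then have "(\<forall>s. degree (F s * G s) \<le> N + M) \<and> degree (F' * G s0 + F s0 * G') \<le> N + M"
    by (metis add_mono degree_add_le degree_mult_le order_trans)
  moreover have "((\<lambda>s. coeff (F s * G s) n) has_real_derivative coeff (F' * G s0 + F s0 * G') n) (at s0)" for n
    unfolding coeff_mult coeff_add sum.distrib[symmetric]
  proof (rule DERIV_sum)
    fix i
    have "((\<lambda>s. coeff (F s) i) has_real_derivative coeff F' i) (at s0)"
      and "((\<lambda>s. coeff (G s) (n - i)) has_real_derivative coeff G' (n - i)) (at s0)"
      using assms unfolding has_coeff_derivative_def by auto
    from DERIV_mult[OF this] show "((\<lambda>s. coeff (F s) i * coeff (G s) (n - i)) has_real_derivative
        coeff F' i * coeff (G s0) (n - i) + coeff (F s0) i * coeff G' (n - i)) (at s0)"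
      by (simp add: mult.commute)
  qed
  ultimately show ?thesis
    unfolding has_coeff_derivative_def by blast
qed

lemma has_coeff_derivative_poly:
  assumes "has_coeff_derivative F F' s0" and "(g has_real_derivative g') (at s0)"
  shows "((\<lambda>s. poly (F s) (g s)) has_real_derivative
           poly F' (g s0) + poly (pderiv (F s0)) (g s0) * g') (at s0)"
proof -
  obtain N where N: "\<forall>s. degree (F s) \<le> N" "degree F' \<le> N"
    using assms(1) unfolding has_coeff_derivative_def by auto
  define D where "D x = (\<Sum>i\<le>N. coeff (F s0) i * (of_nat i * x ^ (i - Suc 0)))" for x
  have "((\<lambda>x. \<Sum>i\<le>N. coeff (F s0) i * x ^ i) has_real_derivative D x) (at x)" for x
    unfolding D_def by (intro DERIV_sum DERIV_cmult DERIV_pow)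
  moreover have "(\<lambda>x. \<Sum>i\<le>N. coeff (F s0) i * x ^ i) = poly (F s0)"
    using N by (simp add: fun_eq_iff poly_eq_sum_coeff_le[of "F s0" N])
  ultimately have D: "D x = poly (pderiv (F s0)) x" for x
    using DERIV_unique poly_DERIV by metis
  have "((\<lambda>s. \<Sum>i\<le>N. coeff (F s) i * g s ^ i) has_real_derivative
      (\<Sum>i\<le>N. coeff F' i * g s0 ^ i + coeff (F s0) i * (of_nat i * g s0 ^ (i - 1)) * g')) (at s0)"
  proof (rule DERIV_sum)
    fix i
    have "((\<lambda>s. coeff (F s) i) has_real_derivative coeff F' i) (at s0)"
      using assms(1) unfolding has_coeff_derivative_def by auto
    from DERIV_mult[OF this DERIV_power[OF assms(2), of i]]
    show "((\<lambda>s. coeff (F s) i * g s ^ i) has_real_derivative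
        coeff F' i * g s0 ^ i + coeff (F s0) i * (of_nat i * g s0 ^ (i - 1)) * g') (at s0)"
      by (simp add: algebra_simps)
  qed
  moreover have "(\<Sum>i\<le>N. coeff F' i * g s0 ^ i + coeff (F s0) i * (of_nat i * g s0 ^ (i - 1)) * g')
      = poly F' (g s0) + poly (pderiv (F s0)) (g s0) * g'"
    using N D[of "g s0"] by (simp add: D_def sum.distrib poly_eq_sum_coeff_le[of F' N] flip: sum_distrib_right)
  ultimately show ?thesis
    using N by (simp add: poly_eq_sum_coeff_le[of "F _" N])
qed

locale poly_functional_family =
  fixes L :: "real \<Rightarrow> real poly \<Rightarrow> real" and dL :: "real poly \<Rightarrow> real" and s0 :: real
  assumes functional: "poly_functional (L s)"
    and deriv_functional: "poly_functional dL"
    and has_derivative_moment: "((\<lambda>s. L s (monom 1 i)) has_real_derivative dL (monom 1 i)) (at s0)"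
begin

lemma has_real_derivative_apply:
  assumes "has_coeff_derivative F F' s0"
  shows "((\<lambda>s. L s (F s)) has_real_derivative L s0 F' + dL (F s0)) (at s0)"
proof -
  obtain N where N: "\<forall>s. degree (F s) \<le> N" "degree F' \<le> N"
    using assms unfolding has_coeff_derivative_def by auto
  have "((\<lambda>s. \<Sum>i\<le>N. coeff (F s) i * L s (monom 1 i)) has_real_derivative
      (\<Sum>i\<le>N. coeff F' i * L s0 (monom 1 i) + coeff (F s0) i * dL (monom 1 i))) (at s0)"
  proof (rule DERIV_sum)
    fix i
    have "((\<lambda>s. coeff (F s) i) has_real_derivative coeff F' i) (at s0)"
      using assms unfolding has_coeff_derivative_def by auto
    from DERIV_mult[OF this has_derivative_moment]
    show "((\<lambda>s. coeff (F s) i * L s (monom 1 i)) has_real_derivative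
        coeff F' i * L s0 (monom 1 i) + coeff (F s0) i * dL (monom 1 i)) (at s0)"
      by (simp add: algebra_simps)
  qed
  moreover have "L s (F s) = (\<Sum>i\<le>N. coeff (F s) i * L s (monom 1 i))" for s
    by (rule poly_functional.eq_sum_moments[OF functional]) (use N in auto)
  moreover have "L s0 F' = (\<Sum>i\<le>N. coeff F' i * L s0 (monom 1 i))"
    by (rule poly_functional.eq_sum_moments[OF functional N(2)])
  moreover have "dL (F s0) = (\<Sum>i\<le>N. coeff (F s0) i * dL (monom 1 i))"
    by (rule poly_functional.eq_sum_moments[OF deriv_functional]) (use N in auto)
  ultimately show ?thesis
    by (simp add: sum.distrib)
qed

lemma has_real_derivative_projection_coeff:
  assumes "posdef_poly_functional (L s0)" and G: "has_coeff_derivative G G' s0" and "G s0 \<noteq> 0"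
  shows "\<exists>c'. ((\<lambda>s. L s (p * G s) / L s (G s * G s)) has_real_derivative c') (at s0)"
proof -
  obtain a' where a': "((\<lambda>s. L s (p * G s)) has_real_derivative a') (at s0)"
    using has_real_derivative_apply[OF has_coeff_derivative_mult[OF has_coeff_derivative_const G]] by blast
  obtain b' where b': "((\<lambda>s. L s (G s * G s)) has_real_derivative b') (at s0)"
    using has_real_derivative_apply[OF has_coeff_derivative_mult[OF G G]] by blast
  have "L s0 (G s0 * G s0) \<noteq> 0"
    using posdef_poly_functional.square_pos[OF assms(1,3)] by simp
  then show ?thesis
    using DERIV_divide[OF a' b'] by blast
qed

lemma has_coeff_derivative_gram_schmidt:
  assumes "posdef_poly_functional (L s0)"
  shows "\<exists>G'. has_coeff_derivative (\<lambda>s. gram_schmidt (L s) N) G' s0"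
proof (induction N rule: less_induct)
  case (less N)
  show ?case
  proof (cases N)
    case 0
    then show ?thesis
      using has_coeff_derivative_const by auto
  next
    case (Suc M)
    let ?g = "\<lambda>l s. gram_schmidt (L s) l"
    let ?c = "\<lambda>l s. L s (monom 1 N * ?g l s) / L s (?g l s * ?g l s)"
    have "\<forall>l\<in>{..M}. \<exists>G'. has_coeff_derivative (?g l) G' s0"
      using less.IH Suc by simp
    then obtain G' where G': "\<forall>l\<in>{..M}. has_coeff_derivative (?g l) (G' l) s0"
      by (rule bchoice[THEN exE])
    have "\<forall>l\<in>{..M}. \<exists>c'. (?c l has_real_derivative c') (at s0)"
    proof
      fix l assume "l \<in> {..M}"
      show "\<exists>c'. (?c l has_real_derivative c') (at s0)"
        by (rule has_real_derivative_projection_coeff[OF assms G'[rule_format, OF \<open>l \<in> {..M}\<close>]])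
          (rule gram_schmidt_nonzero)
    qed
    then obtain C where C: "\<forall>l\<in>{..M}. (?c l has_real_derivative C l) (at s0)"
      by (rule bchoice[THEN exE])
    have "has_coeff_derivative (\<lambda>s. \<Sum>l\<le>M. smult (?c l s) (?g l s))
        (\<Sum>l\<le>M. smult (?c l s0) (G' l) + smult (C l) (?g l s0)) s0"
      using G' C by (intro has_coeff_derivative_sum has_coeff_derivative_smult) auto
    then have "has_coeff_derivative (\<lambda>s. monom 1 N - (\<Sum>l\<le>M. smult (?c l s) (?g l s)))
        (0 - (\<Sum>l\<le>M. smult (?c l s0) (G' l) + smult (C l) (?g l s0))) s0"
      by (rule has_coeff_derivative_diff[OF has_coeff_derivative_const])
    moreover have "(\<lambda>s. monom 1 N - (\<Sum>l\<le>M. smult (?c l s) (?g l s))) = (\<lambda>s. gram_schmidt (L s) N)"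
      by (simp add: Suc gram_schmidt.simps(2))
    ultimately show ?thesis
      by auto
  qed
qed

lemma gram_schmidt_derivative:
  assumes posdef: "eventually (\<lambda>s. posdef_poly_functional (L s)) (nhds s0)"
  obtains P' where "has_coeff_derivative (\<lambda>s. gram_schmidt (L s) N) P' s0"
    and "\<forall>i\<ge>N. coeff P' i = 0"
    and "\<And>q. \<forall>i\<ge>N. coeff q i = 0 \<Longrightarrow> L s0 (P' * q) = - dL (gram_schmidt (L s0) N * q)"
    and "((\<lambda>s. L s (gram_schmidt (L s) N * gram_schmidt (L s) N)) has_real_derivative
           dL (gram_schmidt (L s0) N * gram_schmidt (L s0) N)) (at s0)"
proof -
  let ?P = "\<lambda>s. gram_schmidt (L s) N"
  have posdef0: "posdef_poly_functional (L s0)"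
    using posdef eventually_nhds_x_imp_x by blast
  then obtain P' where P': "has_coeff_derivative ?P P' s0"
    using has_coeff_derivative_gram_schmidt by blast
  have P'_low: "\<forall>i\<ge>N. coeff P' i = 0"
  proof (intro allI impI)
    fix i assume "N \<le> i"
    then have "coeff (?P s) i = (if i = N then 1 else 0)" for s
      by (simp add: coeff_gram_schmidt_above)
    with P' show "coeff P' i = 0"
      by (rule has_coeff_derivative_coeff_const)
  qed
  have "L s0 (P' * q) = - dL (?P s0 * q)" if q: "\<forall>i\<ge>N. coeff q i = 0" for q
  proof -
    have "((\<lambda>s. L s (?P s * q)) has_real_derivative L s0 (P' * q) + dL (?P s0 * q)) (at s0)"
      using has_real_derivative_apply[OF has_coeff_derivative_mult[OF P' has_coeff_derivative_const]]
      by simp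
    moreover have "eventually (\<lambda>s. L s (?P s * q) = 0) (nhds s0)"
      using posdef
      by eventually_elim (rule posdef_poly_functional.gram_schmidt_orthogonal[OF _ q])
    ultimately show ?thesis
      using has_real_derivative_locally_zero by fastforce
  qed
  moreover have "((\<lambda>s. L s (?P s * ?P s)) has_real_derivative dL (?P s0 * ?P s0)) (at s0)"
  proof -
    have "L s0 (?P s0 * P') = 0"
      using posdef_poly_functional.gram_schmidt_orthogonal[OF posdef0 P'_low] .
    moreover have "L s0 (P' * ?P s0 + ?P s0 * P') = L s0 (?P s0 * P') + L s0 (?P s0 * P')"
      by (simp only: poly_functional.add[OF functional] mult.commute[of P' "?P s0"])
    ultimately have "L s0 (P' * ?P s0 + ?P s0 * P') = 0"
      by simp
    then show ?thesis
      using has_real_derivative_apply[OF has_coeff_derivative_mult[OF P' P']] by simp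
  qed
  ultimately show ?thesis
    using that P' P'_low by blast
qed

end

section \<open>Gaussian integrals of polynomials\<close>

lemma integrable_gauss_monomial: "integrable lborel (\<lambda>x::real. x ^ i * exp (- (x\<^sup>2)))"
proof -
  define \<sigma> :: real where "\<sigma> = 1 / sqrt 2"
  have "integrable lborel (\<lambda>x. sqrt pi * (normal_density 0 \<sigma> x * (x - 0) ^ i))"
    using integrable_normal_moment[of \<sigma> 0 i] by (intro integrable_mult_right) (simp add: \<sigma>_def)
  moreover have "(\<lambda>x. sqrt pi * (normal_density 0 \<sigma> x * (x - 0) ^ i)) = (\<lambda>x. x ^ i * exp (- (x\<^sup>2)))"
    by (auto simp: fun_eq_iff normal_density_def \<sigma>_def real_sqrt_mult power_divide)
  ultimately show ?thesis
    by metis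
qed

lemma integrable_gauss_poly: "integrable lborel (\<lambda>x. poly f x * exp (- (x\<^sup>2)))" for f :: "real poly"
proof -
  have "integrable lborel (\<lambda>x. \<Sum>i\<le>degree f. coeff f i * (x ^ i * exp (- (x\<^sup>2))))"
    using integrable_gauss_monomial by auto
  then show ?thesis
    by (simp add: poly_altdef sum_distrib_right mult.assoc)
qed

lemma set_integrable_gauss_poly:
  "A \<in> sets lborel \<Longrightarrow> set_integrable lborel A (\<lambda>x. poly f x * exp (- (x\<^sup>2)))" for f :: "real poly"
  unfolding set_integrable_def by (rule integrable_mult_indicator[OF _ integrable_gauss_poly])

lemma gauss_poly_tendsto_at_top: "((\<lambda>x. poly f x * exp (- (x\<^sup>2))) \<longlongrightarrow> 0) at_top" for f :: "real poly"
proof -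
  have "((\<lambda>x::real. \<Sum>i\<le>degree f. coeff f i * (x ^ i * exp (- (x\<^sup>2)))) \<longlongrightarrow> (\<Sum>i\<le>degree f. coeff f i * 0)) at_top"
    by (intro tendsto_intros) real_asymp
  then show ?thesis
    by (simp add: poly_altdef sum_distrib_right mult.assoc)
qed

lemma gauss_poly_tendsto_at_bot: "((\<lambda>x. poly f x * exp (- (x\<^sup>2))) \<longlongrightarrow> 0) at_bot" for f :: "real poly"
proof -
  have "((\<lambda>x::real. \<Sum>i\<le>degree f. coeff f i * (x ^ i * exp (- (x\<^sup>2)))) \<longlongrightarrow> (\<Sum>i\<le>degree f. coeff f i * 0)) at_bot"
    by (intro tendsto_intros) real_asymp
  then show ?thesis
    by (simp add: poly_altdef sum_distrib_right mult.assoc)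
qed

definition gauss_tail :: "real poly \<Rightarrow> real \<Rightarrow> real" where
  "gauss_tail f a = (LBINT x=ereal a..\<infinity>. poly f x * exp (- (x\<^sup>2)))"

lemma gauss_tail_eq_integral_indicator:
  "gauss_tail f a = (LINT x|lborel. indicator {a<..} x * (poly f x * exp (- (x\<^sup>2))))"
  unfolding gauss_tail_def interval_integral_to_infinity_eq set_lebesgue_integral_def by simp

lemma gauss_tail_has_derivative:
  "(gauss_tail f has_real_derivative - (poly f a * exp (- (a\<^sup>2)))) (at a)"
proof -
  let ?g = "\<lambda>x. poly f x * exp (- (x\<^sup>2))"
  have split: "gauss_tail f b = gauss_tail f a - (LBINT x=ereal a..ereal b. ?g x)" for b
  proof -
    have "(LBINT x=ereal a..ereal b. ?g x) + (LBINT x=ereal b..\<infinity>. ?g x) = (LBINT x=ereal a..\<infinity>. ?g x)"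
      by (rule interval_integral_sum)
        (auto simp: interval_lebesgue_integrable_def intro!: set_integrable_gauss_poly)
    then show ?thesis
      unfolding gauss_tail_def by simp
  qed
  have "((\<lambda>b. LBINT x=a..b. ?g x) has_vector_derivative ?g a) (at a within {a-1..a+1})"
    by (rule interval_integral_FTC2) (auto intro!: continuous_intros)
  then have "((\<lambda>b. LBINT x=a..b. ?g x) has_real_derivative ?g a) (at a)"
    by (simp add: at_within_Icc_at has_real_derivative_iff_has_vector_derivative)
  then have "((\<lambda>b. gauss_tail f a - (LBINT x=a..b. ?g x)) has_real_derivative 0 - ?g a) (at a)"
    by (intro DERIV_diff DERIV_const)
  then show ?thesis
    unfolding split[symmetric] by simp
qed

definition gauss_deriv_poly :: "real poly \<Rightarrow> real poly" where
  "gauss_deriv_poly f = pderiv f - smult 2 (pCons 0 f)"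

lemma gauss_poly_has_vector_derivative:
  "((\<lambda>x. poly f x * exp (- (x\<^sup>2))) has_vector_derivative poly (gauss_deriv_poly f) x * exp (- (x\<^sup>2))) (at x)"
proof -
  have "((\<lambda>x. poly f x * exp (- (x\<^sup>2))) has_real_derivative
      poly (pderiv f) x * exp (- (x\<^sup>2)) + poly f x * (exp (- (x\<^sup>2)) * (- (2 * x)))) (at x)"
    by (auto intro!: derivative_eq_intros poly_DERIV simp: power2_eq_square)
  then show ?thesis
    by (simp add: has_real_derivative_iff_has_vector_derivative gauss_deriv_poly_def algebra_simps)
qed

lemma gauss_tail_gauss_deriv_poly: "gauss_tail (gauss_deriv_poly f) a = - (poly f a * exp (- (a\<^sup>2)))"
proof -
  let ?g = "\<lambda>x. poly f x * exp (- (x\<^sup>2))"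
  have "isCont ?g a"
    by (intro continuous_intros)
  then have "((?g \<circ> real_of_ereal) \<longlongrightarrow> ?g a) (at_right (ereal a))"
    unfolding ereal_tendsto_simps1 isCont_def by (rule tendsto_mono[OF at_le[OF subset_UNIV]])
  then have "(LBINT x=ereal a..\<infinity>. poly (gauss_deriv_poly f) x * exp (- (x\<^sup>2))) = 0 - ?g a"
    by (intro interval_integral_FTC_integrable[where F = ?g])
      (auto intro!: gauss_poly_has_vector_derivative continuous_intros set_integrable_gauss_poly
        simp: ereal_tendsto_simps1 gauss_poly_tendsto_at_top)
  then show ?thesis
    unfolding gauss_tail_def by simp
qed

lemma integral_gauss_deriv_poly: "(LINT x|lborel. poly (gauss_deriv_poly f) x * exp (- (x\<^sup>2))) = 0"
proof -
  have "(LBINT x=-\<infinity>..\<infinity>. poly (gauss_deriv_poly f) x * exp (- (x\<^sup>2))) = 0 - 0"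
    by (intro interval_integral_FTC_integrable[where F = "\<lambda>x. poly f x * exp (- (x\<^sup>2))"])
      (auto intro!: gauss_poly_has_vector_derivative continuous_intros set_integrable_gauss_poly
        simp: ereal_tendsto_simps1 gauss_poly_tendsto_at_top gauss_poly_tendsto_at_bot)
  then show ?thesis
    unfolding interval_lebesgue_integral_def set_lebesgue_integral_def by simp
qed

section \<open>The weight functional\<close>

definition weight_functional :: "nat \<Rightarrow> (nat \<Rightarrow> real) \<Rightarrow> (nat \<Rightarrow> real) \<Rightarrow> real poly \<Rightarrow> real" where
  "weight_functional m \<omega> t f = (LINT x|lborel. poly f x * weight m \<omega> t x)"

definition node_sum :: "nat \<Rightarrow> (nat \<Rightarrow> real) \<Rightarrow> (nat \<Rightarrow> real) \<Rightarrow> real poly \<Rightarrow> real" where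
  "node_sum m \<omega> t f = (\<Sum>k=1..m. \<omega> k * exp (- ((t k)\<^sup>2)) * poly f (t k))"

lemma wip_eq_weight_functional: "wip m \<omega> t p q = weight_functional m \<omega> t (p * q)"
  by (simp add: wip_def weight_functional_def)

lemma theta_eq_indicator: "theta (x - a) = indicator {a<..} x"
  by (simp add: theta_def indicator_def)

lemma poly_mult_weight_eq:
  "poly f x * weight m \<omega> t x = \<omega> 0 * (poly f x * exp (- (x\<^sup>2)))
     + (\<Sum>k=1..m. \<omega> k * (indicator {t k<..} x * (poly f x * exp (- (x\<^sup>2)))))"
  unfolding weight_def theta_eq_indicator by (simp only: sum_distrib_left distrib_left mult_ac)

lemma integrable_gauss_poly_indicator:
  "integrable lborel (\<lambda>x. indicator {a<..} x * (poly f x * exp (- (x\<^sup>2))))"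
  for a :: real and f :: "real poly"
  using set_integrable_gauss_poly[of "{a<..}" f] by (simp add: set_integrable_def)

lemma integrable_poly_weight: "integrable lborel (\<lambda>x. poly f x * weight m \<omega> t x)"
  unfolding poly_mult_weight_eq using integrable_gauss_poly integrable_gauss_poly_indicator by auto

lemma weight_functional_eq_gauss:
  "weight_functional m \<omega> t f = \<omega> 0 * (LINT x|lborel. poly f x * exp (- (x\<^sup>2)))
     + (\<Sum>k=1..m. \<omega> k * gauss_tail f (t k))"
  unfolding weight_functional_def poly_mult_weight_eq gauss_tail_eq_integral_indicator
  using integrable_gauss_poly integrable_gauss_poly_indicator by (simp add: integral_sum)

interpretation weight_functional: poly_functional "weight_functional m \<omega> t" for m \<omega> t
  by unfold_locales
    (simp_all add: weight_functional_def integrable_poly_weight distrib_right mult.assoc)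

lemma weight_functional_gauss_deriv_poly:
  "weight_functional m \<omega> t (gauss_deriv_poly f) = - node_sum m \<omega> t f"
  by (simp add: weight_functional_eq_gauss integral_gauss_deriv_poly gauss_tail_gauss_deriv_poly
      node_sum_def sum_negf mult_ac)

lemma weight_functional_family:
  assumes "j \<in> {1..m}"
  shows "poly_functional_family (\<lambda>s. weight_functional m \<omega> (t(j := s)))
           (\<lambda>f. - (\<omega> j * exp (- ((t j)\<^sup>2)) * poly f (t j))) (t j)"
proof
  fix i
  define c where "c = \<omega> 0 * (LINT x|lborel. poly (monom 1 i) x * exp (- (x\<^sup>2)))
    + (\<Sum>k\<in>{1..m}-{j}. \<omega> k * gauss_tail (monom 1 i) (t k))"
  have "weight_functional m \<omega> (t(j := s)) (monom 1 i) = c + \<omega> j * gauss_tail (monom 1 i) s" for s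
    using assms by (simp add: weight_functional_eq_gauss c_def sum.remove[of _ j])
  then show "((\<lambda>s. weight_functional m \<omega> (t(j := s)) (monom 1 i)) has_real_derivative
      - (\<omega> j * exp (- ((t j)\<^sup>2)) * poly (monom 1 i) (t j))) (at (t j))"
    by (auto intro!: derivative_eq_intros gauss_tail_has_derivative)
qed (unfold_locales, simp_all add: weight_functional.add weight_functional.smult algebra_simps)

definition admissible :: "nat \<Rightarrow> (nat \<Rightarrow> real) \<Rightarrow> (nat \<Rightarrow> real) \<Rightarrow> bool" where
  "admissible m \<omega> t \<longleftrightarrow>
     (\<forall>i j. 1 \<le> i \<longrightarrow> i < j \<longrightarrow> j \<le> m \<longrightarrow> t i < t j) \<and>
     (\<forall>l\<le>m. (\<Sum>k=0..l. \<omega> k) \<ge> 0) \<and> (\<exists>x. weight m \<omega> t x \<noteq> 0)"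

lemma step_sum_nonneg:
  fixes \<omega> t :: "nat \<Rightarrow> real"
  assumes ordered: "\<forall>i j. 1 \<le> i \<longrightarrow> i < j \<longrightarrow> j \<le> m \<longrightarrow> t i < t j"
    and partial_sums: "\<forall>l\<le>m. (\<Sum>k=0..l. \<omega> k) \<ge> 0"
  shows "0 \<le> \<omega> 0 + (\<Sum>k=1..m. \<omega> k * theta (x - t k))"
proof -
  define l where "l = Max (insert 0 {k\<in>{1..m}. t k < x})"
  have l_le: "l \<le> m"
    by (auto simp: l_def)
  have "{k\<in>{1..m}. t k < x} = {1..l}"
  proof (intro equalityI subsetI)
    fix k assume "k \<in> {k\<in>{1..m}. t k < x}"
    then show "k \<in> {1..l}"
      by (auto simp: l_def)
  next
    fix k assume k: "k \<in> {1..l}"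
    then have "l \<in> {k\<in>{1..m}. t k < x}"
      using Max_in[of "insert 0 {k\<in>{1..m}. t k < x}"] by (auto simp: l_def)
    then show "k \<in> {k\<in>{1..m}. t k < x}"
      using k ordered by (cases "k = l") (auto, meson less_le less_trans)
  qed
  then have "(\<Sum>k=1..m. \<omega> k * theta (x - t k)) = (\<Sum>k=1..l. \<omega> k)"
    by (simp add: theta_def sum.inter_filter[symmetric] if_distrib cong: if_cong)
  then have "\<omega> 0 + (\<Sum>k=1..m. \<omega> k * theta (x - t k)) = (\<Sum>k=0..l. \<omega> k)"
    by (simp add: sum.atLeast_Suc_atMost)
  then show ?thesis
    using partial_sums l_le by simp
qed

lemma weight_nonneg:
  assumes "admissible m \<omega> t"
  shows "0 \<le> weight m \<omega> t x"
  using assms step_sum_nonneg[of m t \<omega> x] by (simp add: admissible_def weight_def)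

lemma theta_locally_constant_left:
  fixes t :: "nat \<Rightarrow> real"
  shows "\<exists>a<x. \<forall>y. a < y \<longrightarrow> y \<le> x \<longrightarrow> (\<forall>k\<in>{1..m}. theta (y - t k) = theta (x - t k))"
proof -
  define A where "A = insert (x - 1) (t ` {k\<in>{1..m}. t k < x})"
  have "Max A \<in> A"
    by (intro Max_in) (simp_all add: A_def)
  then have "Max A < x"
    by (auto simp: A_def)
  moreover have "t k \<le> Max A" if "k \<in> {1..m}" "t k < x" for k
    using that by (intro Max_ge) (auto simp: A_def)
  ultimately show ?thesis
    by (intro exI[of _ "Max A"]) (fastforce simp: theta_def)
qed

lemma admissible_weight_pos_interval:
  assumes "admissible m \<omega> t"
  obtains a b where "a < b" and "\<And>y. a < y \<Longrightarrow> y < b \<Longrightarrow> 0 < weight m \<omega> t y"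
proof -
  obtain x where "weight m \<omega> t x \<noteq> 0"
    using assms by (auto simp: admissible_def)
  then have pos: "0 < \<omega> 0 + (\<Sum>k=1..m. \<omega> k * theta (x - t k))"
    using weight_nonneg[OF assms, of x] by (simp add: weight_def zero_le_mult_iff)
  obtain a where "a < x" and a: "\<And>y. a < y \<Longrightarrow> y \<le> x \<Longrightarrow> \<forall>k\<in>{1..m}. theta (y - t k) = theta (x - t k)"
    using theta_locally_constant_left by blast
  have "0 < weight m \<omega> t y" if "a < y" "y < x" for y
  proof -
    have "(\<Sum>k=1..m. \<omega> k * theta (y - t k)) = (\<Sum>k=1..m. \<omega> k * theta (x - t k))"
      using a[of y] that by (intro sum.cong) auto
    then show ?thesis
      using pos by (simp add: weight_def)
  qed
  with \<open>a < x\<close> show thesis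
    using that by blast
qed

lemma poly_AE_zero_on_interval_imp_zero:
  fixes p :: "real poly"
  assumes "a < b" and "AE x in lborel. x \<in> {a<..<b} \<longrightarrow> poly p x = 0"
  shows "p = 0"
proof (rule ccontr)
  assume "p \<noteq> 0"
  then have "AE x in lborel. x \<notin> {x. poly p x = 0}"
    by (intro AE_discrete_difference countable_finite poly_roots_finite) simp_all
  with assms(2) have "AE x in lborel. x \<notin> {a<..<b}"
    by eventually_elim auto
  then have "emeasure lborel {a<..<b} = 0"
    by (subst (asm) AE_iff_measurable[where N = "{a<..<b}"]) auto
  with assms(1) show False
    by simp
qed

lemma admissible_posdef:
  assumes "admissible m \<omega> t"
  shows "posdef_poly_functional (weight_functional m \<omega> t)"
proof
  fix p :: "real poly"
  assume "p \<noteq> 0"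
  obtain a b where "a < b" and pos: "\<And>y. a < y \<Longrightarrow> y < b \<Longrightarrow> 0 < weight m \<omega> t y"
    using admissible_weight_pos_interval[OF assms] by blast
  have nonneg: "\<And>x. 0 \<le> poly (p * p) x * weight m \<omega> t x"
    using weight_nonneg[OF assms] by simp
  then have "0 \<le> weight_functional m \<omega> t (p * p)"
    unfolding weight_functional_def by (intro integral_nonneg_AE) simp
  moreover have "weight_functional m \<omega> t (p * p) \<noteq> 0"
  proof
    assume "weight_functional m \<omega> t (p * p) = 0"
    then have "AE x in lborel. poly (p * p) x * weight m \<omega> t x = 0"
      using integral_nonneg_eq_0_iff_AE[OF integrable_poly_weight AE_I2[OF nonneg]]
      unfolding weight_functional_def by blast
    then have "AE x in lborel. x \<in> {a<..<b} \<longrightarrow> poly p x = 0"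
      by eventually_elim (auto dest: pos)
    then show False
      using poly_AE_zero_on_interval_imp_zero[OF \<open>a < b\<close>] \<open>p \<noteq> 0\<close> by blast
  qed
  ultimately show "0 < weight_functional m \<omega> t (p * p)"
    by simp
qed

lemma nodes_ordered_eventually_update:
  fixes t :: "nat \<Rightarrow> real"
  assumes ordered: "\<forall>i j. 1 \<le> i \<longrightarrow> i < j \<longrightarrow> j \<le> m \<longrightarrow> t i < t j" and j: "j \<in> {1..m}"
  shows "eventually (\<lambda>s. \<forall>i k. 1 \<le> i \<longrightarrow> i < k \<longrightarrow> k \<le> m \<longrightarrow> (t(j := s)) i < (t(j := s)) k)
           (nhds (t j))"
proof -
  have "eventually (\<lambda>s. (i < j \<longrightarrow> t i < s) \<and> (j < i \<longrightarrow> s < t i)) (nhds (t j))" if "i \<in> {1..m}" for i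
    using ordered that j
    by (intro eventually_conj; cases "i < j"; cases "j < i")
      (auto intro: order_tendstoD[OF filterlim_ident])
  then have "eventually (\<lambda>s. \<forall>i\<in>{1..m}. (i < j \<longrightarrow> t i < s) \<and> (j < i \<longrightarrow> s < t i)) (nhds (t j))"
    by (simp add: eventually_ball_finite)
  then show ?thesis
  proof eventually_elim
    case (elim s)
    show ?case
    proof (intro allI impI)
      fix i k assume "1 \<le> i" "i < k" "k \<le> m"
      then show "(t(j := s)) i < (t(j := s)) k"
        using elim ordered by (cases "i = j"; cases "k = j") auto
    qed
  qed
qed

lemma weight_nonzero_eventually_update:
  assumes "admissible m \<omega> t"
  shows "eventually (\<lambda>s. \<exists>x. weight m \<omega> (t(j := s)) x \<noteq> 0) (nhds (t j))"
proof -
  obtain a b where "a < b" and pos: "\<And>y. a < y \<Longrightarrow> y < b \<Longrightarrow> 0 < weight m \<omega> t y"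
    using admissible_weight_pos_interval[OF assms] by blast
  define x where "x = (if (a + b) / 2 = t j then (a + t j) / 2 else (a + b) / 2)"
  have x: "a < x" "x < b" "x \<noteq> t j"
    using \<open>a < b\<close> by (auto simp: x_def)
  have "eventually (\<lambda>s. theta (x - s) = theta (x - t j)) (nhds (t j))"
  proof (cases "t j < x")
    case True
    then show ?thesis
      by (auto simp: theta_def elim: eventually_mono[OF order_tendstoD(2)[OF filterlim_ident]])
  next
    case False
    with x(3) have "x < t j"
      by simp
    then show ?thesis
      by (auto simp: theta_def elim: eventually_mono[OF order_tendstoD(1)[OF filterlim_ident]])
  qed
  then show ?thesis
  proof eventually_elim
    case (elim s)
    then have "(\<Sum>k=1..m. \<omega> k * theta (x - (t(j := s)) k)) = (\<Sum>k=1..m. \<omega> k * theta (x - t k))"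
      by (intro sum.cong) auto
    then have "weight m \<omega> (t(j := s)) x = weight m \<omega> t x"
      by (simp add: weight_def)
    then show ?case
      using pos[OF x(1,2)] by (intro exI[of _ x]) simp
  qed
qed

lemma admissible_eventually_update:
  assumes adm: "admissible m \<omega> t" and j: "j \<in> {1..m}"
  shows "eventually (\<lambda>s. admissible m \<omega> (t(j := s))) (nhds (t j))"
proof -
  have "\<forall>i j. 1 \<le> i \<longrightarrow> i < j \<longrightarrow> j \<le> m \<longrightarrow> t i < t j"
    using adm by (simp add: admissible_def)
  from nodes_ordered_eventually_update[OF this j] weight_nonzero_eventually_update[OF adm]
  show ?thesis
    by eventually_elim (use adm in \<open>simp add: admissible_def\<close>)
qed

section \<open>Orthogonal polynomials and their derivatives in a node\<close>

lemma OP_eq_gram_schmidt: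
  assumes "admissible m \<omega> t"
  shows "OP m \<omega> t N = gram_schmidt (weight_functional m \<omega> t) N"
  unfolding OP_def wip_eq_weight_functional
    posdef_poly_functional.gram_schmidt_unique[OF admissible_posdef[OF assms]]
  by simp

lemma hn_eq_weight_functional: "hn m \<omega> t N = weight_functional m \<omega> t (OP m \<omega> t N * OP m \<omega> t N)"
  by (simp add: hn_def wip_eq_weight_functional)

lemma hn_pos:
  assumes "admissible m \<omega> t"
  shows "0 < hn m \<omega> t N"
  using posdef_poly_functional.square_pos[OF admissible_posdef[OF assms] gram_schmidt_nonzero]
  by (simp add: hn_eq_weight_functional OP_eq_gram_schmidt[OF assms])

lemma OP_derivative_node:
  assumes adm: "admissible m \<omega> t" and j: "j \<in> {1..m}"
  obtains P' where "\<forall>i\<ge>N. coeff P' i = 0"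
    and "\<And>q. \<forall>i\<ge>N. coeff q i = 0 \<Longrightarrow>
           weight_functional m \<omega> t (P' * q) = \<omega> j * exp (- ((t j)\<^sup>2)) * poly (OP m \<omega> t N * q) (t j)"
    and "\<And>g g'. (g has_real_derivative g') (at (t j)) \<Longrightarrow>
           ((\<lambda>s. poly (OP m \<omega> (t(j := s)) N) (g s)) has_real_derivative
              poly P' (g (t j)) + poly (pderiv (OP m \<omega> t N)) (g (t j)) * g') (at (t j))"
    and "((\<lambda>s. hn m \<omega> (t(j := s)) N) has_real_derivative
           - (\<omega> j * exp (- ((t j)\<^sup>2)) * poly (OP m \<omega> t N) (t j) ^ 2)) (at (t j))"
proof -
  let ?L = "\<lambda>s. weight_functional m \<omega> (t(j := s))"
  interpret family: poly_functional_family ?L "\<lambda>f. - (\<omega> j * exp (- ((t j)\<^sup>2)) * poly f (t j))" "t j"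
    by (rule weight_functional_family[OF j])
  have ev: "eventually (\<lambda>s. admissible m \<omega> (t(j := s))) (nhds (t j))"
    by (rule admissible_eventually_update[OF adm j])
  then have "eventually (\<lambda>s. posdef_poly_functional (?L s)) (nhds (t j))"
    by eventually_elim (rule admissible_posdef)
  then obtain P' where P': "has_coeff_derivative (\<lambda>s. gram_schmidt (?L s) N) P' (t j)"
    and low: "\<forall>i\<ge>N. coeff P' i = 0"
    and orth: "\<And>q. \<forall>i\<ge>N. coeff q i = 0 \<Longrightarrow> weight_functional m \<omega> t (P' * q)
                 = \<omega> j * exp (- ((t j)\<^sup>2)) * poly (gram_schmidt (weight_functional m \<omega> t) N * q) (t j)"
    and norm: "((\<lambda>s. ?L s (gram_schmidt (?L s) N * gram_schmidt (?L s) N)) has_real_derivative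
                 - (\<omega> j * exp (- ((t j)\<^sup>2)) * poly (gram_schmidt (weight_functional m \<omega> t) N) (t j) ^ 2))
                 (at (t j))"
    by (rule family.gram_schmidt_derivative[where N = N]) (simp_all add: power2_eq_square)
  have OP_ev: "eventually (\<lambda>s. OP m \<omega> (t(j := s)) N = gram_schmidt (?L s) N) (nhds (t j))"
    using ev by eventually_elim (rule OP_eq_gram_schmidt)
  note OP_t = OP_eq_gram_schmidt[OF adm]
  show ?thesis
  proof (rule that[OF low])
    show "weight_functional m \<omega> t (P' * q) = \<omega> j * exp (- ((t j)\<^sup>2)) * poly (OP m \<omega> t N * q) (t j)"
      if "\<forall>i\<ge>N. coeff q i = 0" for q
      using orth[OF that] by (simp add: OP_t)
    show "((\<lambda>s. poly (OP m \<omega> (t(j := s)) N) (g s)) has_real_derivative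
        poly P' (g (t j)) + poly (pderiv (OP m \<omega> t N)) (g (t j)) * g') (at (t j))"
      if "(g has_real_derivative g') (at (t j))" for g g'
      using has_coeff_derivative_poly[OF P' that] OP_ev
      by (subst DERIV_cong_ev[OF refl _ refl]) (auto elim: eventually_mono simp: OP_t)
    have "eventually (\<lambda>s. hn m \<omega> (t(j := s)) N = ?L s (gram_schmidt (?L s) N * gram_schmidt (?L s) N))
        (nhds (t j))"
      using OP_ev by eventually_elim (simp add: hn_eq_weight_functional)
    then show "((\<lambda>s. hn m \<omega> (t(j := s)) N) has_real_derivative
        - (\<omega> j * exp (- ((t j)\<^sup>2)) * poly (OP m \<omega> t N) (t j) ^ 2)) (at (t j))"
      using norm by (subst DERIV_cong_ev[OF refl _ refl]) (auto simp: OP_t)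
  qed
qed

section \<open>Pearson-type identities\<close>

text \<open>Integrating \<open>(f w)' = f' w + f w'\<close> over the line, where in the sense of distributions
  \<open>w' = -2 x w + \<Sum>\<^sub>k \<omega>\<^sub>k exp(-t\<^sub>k\<^sup>2) \<delta>(x - t\<^sub>k)\<close>,
  gives the assumption below with \<open>\<nu> f = \<Sum>\<^sub>k \<omega>\<^sub>k exp(-t\<^sub>k\<^sup>2) f(t\<^sub>k)\<close>.\<close>

locale pearson_functional = posdef_poly_functional +
  fixes \<nu> :: "real poly \<Rightarrow> real"
  assumes pearson: "L (gauss_deriv_poly f) = - \<nu> f"
begin

lemma pderiv_mult_eq:
  "L (pderiv p * q) = 2 * L (pCons 0 (p * q)) - L (p * pderiv q) - \<nu> (p * q)"
proof -
  have "L (gauss_deriv_poly (p * q)) = L (p * pderiv q) + L (pderiv p * q) - 2 * L (pCons 0 (p * q))"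
    by (simp only: gauss_deriv_poly_def pderiv_mult diff add smult mult.commute[of q])
  then show ?thesis
    using pearson[of "p * q"] by linarith
qed

lemma coeff_pderiv_gram_schmidt_above: "N \<le> i \<Longrightarrow> coeff (pderiv (gram_schmidt L N)) i = 0"
  by (simp add: coeff_pderiv coeff_gram_schmidt_above)

lemma node_square:
  "\<nu> (gram_schmidt L N * gram_schmidt L N)
     = 2 * coeff (pCons 0 (gram_schmidt L N) - gram_schmidt L (Suc N)) N
         * L (gram_schmidt L N * gram_schmidt L N)"
proof -
  let ?P = "gram_schmidt L (Suc N)" and ?Q = "gram_schmidt L N"
  have "L (?Q * pderiv ?Q) = 0"
    by (intro gram_schmidt_orthogonal allI impI coeff_pderiv_gram_schmidt_above)
  then have "\<nu> (?Q * ?Q) = 2 * L (pCons 0 (?Q * ?Q))"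
    using pderiv_mult_eq[of ?Q ?Q] by (simp add: mult.commute)
  also have "pCons 0 (?Q * ?Q) = ?Q * (pCons 0 ?Q - ?P) + ?P * ?Q"
    by (simp add: algebra_simps)
  also have "L (?Q * (pCons 0 ?Q - ?P) + ?P * ?Q) = L (?Q * (pCons 0 ?Q - ?P))"
    using gram_schmidt_orthogonal[of "Suc N" ?Q]
    by (simp add: add coeff_gram_schmidt_above)
  also have "\<dots> = coeff (pCons 0 ?Q - ?P) N * L (?Q * ?Q)"
  proof (intro gram_schmidt_leading allI impI)
    fix i assume "N < i"
    then consider "i = Suc N" | "Suc N < i"
      by linarith
    then show "coeff (pCons 0 ?Q - ?P) i = 0"
      by cases (auto simp: coeff_gram_schmidt_above coeff_pCons split: nat.split)
  qed
  finally show ?thesis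
    by simp
qed

lemma node_mult_next:
  "\<nu> (gram_schmidt L (Suc N) * gram_schmidt L N)
     = 2 * L (gram_schmidt L (Suc N) * gram_schmidt L (Suc N))
       - real (Suc N) * L (gram_schmidt L N * gram_schmidt L N)"
proof -
  let ?P = "gram_schmidt L (Suc N)" and ?Q = "gram_schmidt L N"
  have "L (?Q * pderiv ?P) = coeff (pderiv ?P) N * L (?Q * ?Q)"
    by (intro gram_schmidt_leading allI impI coeff_pderiv_gram_schmidt_above) simp
  then have "L (pderiv ?P * ?Q) = real (Suc N) * L (?Q * ?Q)"
    by (simp add: coeff_pderiv mult.commute)
  moreover have "L (?P * pderiv ?Q) = 0"
    by (intro gram_schmidt_orthogonal allI impI)
      (simp add: coeff_pderiv_gram_schmidt_above)
  moreover have "L (?P * pCons 0 ?Q) = coeff (pCons 0 ?Q) (Suc N) * L (?P * ?P)"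
    by (intro gram_schmidt_leading allI impI) (auto simp: coeff_pCons coeff_gram_schmidt_above split: nat.split)
  then have "L (pCons 0 (?P * ?Q)) = L (?P * ?P)"
    by simp
  ultimately show ?thesis
    using pderiv_mult_eq[of ?P ?Q] by simp
qed

lemma sum_derivatives_next:
  assumes "\<forall>i\<ge>Suc N. coeff D i = 0"
    and "\<And>q. \<forall>i\<ge>Suc N. coeff q i = 0 \<Longrightarrow> L (D * q) = \<nu> (gram_schmidt L (Suc N) * q)"
  shows "D + pderiv (gram_schmidt L (Suc N))
    = smult (2 * L (gram_schmidt L (Suc N) * gram_schmidt L (Suc N)) / L (gram_schmidt L N * gram_schmidt L N))
        (gram_schmidt L N)"
proof -
  let ?P = "gram_schmidt L (Suc N)" and ?Q = "gram_schmidt L N"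
  let ?c = "2 * L (?P * ?P) / L (?Q * ?Q)"
  have Q_pos: "0 < L (?Q * ?Q)"
    by (rule square_pos[OF gram_schmidt_nonzero])
  have "D + pderiv ?P - smult ?c ?Q = 0"
  proof (rule eq_0_if_orthogonal)
    show "\<forall>i\<ge>Suc N. coeff (D + pderiv ?P - smult ?c ?Q) i = 0"
      using assms(1) by (simp add: coeff_pderiv coeff_gram_schmidt_above)
    fix q :: "real poly" assume q: "\<forall>i\<ge>Suc N. coeff q i = 0"
    have "L (?P * pderiv q) = 0"
      using q by (intro gram_schmidt_orthogonal) (simp add: coeff_pderiv)
    moreover have "L (?P * pCons 0 q) = coeff q N * L (?P * ?P)"
      using q by (subst gram_schmidt_leading) (auto simp: coeff_pCons split: nat.split)
    moreover have "L (?Q * q) = coeff q N * L (?Q * ?Q)"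
      using q by (intro gram_schmidt_leading) auto
    ultimately show "L ((D + pderiv ?P - smult ?c ?Q) * q) = 0"
      using assms(2)[OF q] pderiv_mult_eq[of ?P q] Q_pos
      by (simp add: distrib_right left_diff_distrib add diff smult mult.commute[of q])
  qed
  then show ?thesis
    by simp
qed

lemma sum_derivatives_prev:
  assumes "\<forall>i\<ge>N. coeff D i = 0"
    and "\<And>q. \<forall>i\<ge>N. coeff q i = 0 \<Longrightarrow> L (D * q) = \<nu> (gram_schmidt L N * q)"
  shows "D + pderiv (gram_schmidt L N)
    = smult 2 (pCons 0 (gram_schmidt L N) - gram_schmidt L (Suc N))
      - smult (\<nu> (gram_schmidt L N * gram_schmidt L N) / L (gram_schmidt L N * gram_schmidt L N))
          (gram_schmidt L N)"
proof -
  let ?P = "gram_schmidt L (Suc N)" and ?Q = "gram_schmidt L N"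
  define c where "c = coeff (pCons 0 ?Q - ?P) N"
  define R where "R = pCons 0 ?Q - ?P - smult c ?Q"
  have "\<nu> (?Q * ?Q) / L (?Q * ?Q) = 2 * c"
    using node_square[of N] square_pos[OF gram_schmidt_nonzero[of L N]] by (simp add: c_def)
  then have goal: "smult 2 (pCons 0 ?Q - ?P) - smult (\<nu> (?Q * ?Q) / L (?Q * ?Q)) ?Q = smult 2 R"
    by (simp add: R_def smult_diff_right)
  have "D + pderiv ?Q - smult 2 R = 0"
  proof (rule eq_0_if_orthogonal)
    have "coeff R i = 0" if "N \<le> i" for i
    proof -
      from that consider "i = N" | "i = Suc N" | "Suc N < i"
        by linarith
      then show ?thesis
        by cases (auto simp: R_def c_def coeff_pCons coeff_gram_schmidt_above split: nat.split)
    qed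
    then show "\<forall>i\<ge>N. coeff (D + pderiv ?Q - smult 2 R) i = 0"
      using assms(1) by (simp add: coeff_pderiv_gram_schmidt_above)
    fix q :: "real poly" assume q: "\<forall>i\<ge>N. coeff q i = 0"
    have "L (?Q * pderiv q) = 0"
      using q by (intro gram_schmidt_orthogonal) (simp add: coeff_pderiv)
    moreover have "L (?P * q) = 0" and "L (?Q * q) = 0"
      using q by (auto intro!: gram_schmidt_orthogonal)
    ultimately show "L ((D + pderiv ?Q - smult 2 R) * q) = 0"
      using assms(2)[OF q] pderiv_mult_eq[of ?Q q]
      by (simp add: R_def distrib_right left_diff_distrib add diff smult)
  qed
  then show ?thesis
    unfolding goal by simp
qed

end

lemma admissible_pearson:
  assumes "admissible m \<omega> t"
  shows "pearson_functional (weight_functional m \<omega> t) (node_sum m \<omega> t)"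
proof -
  interpret posdef_poly_functional "weight_functional m \<omega> t"
    by (rule admissible_posdef[OF assms])
  show ?thesis
    by unfold_locales (rule weight_functional_gauss_deriv_poly)
qed

section \<open>The operator \<open>\<Sum>\<^sub>k \<partial>/\<partial>t\<^sub>k\<close>\<close>

definition has_partials_sum :: "nat \<Rightarrow> ((nat \<Rightarrow> real) \<Rightarrow> real) \<Rightarrow> real \<Rightarrow> (nat \<Rightarrow> real) \<Rightarrow> bool" where
  "has_partials_sum m F D t \<longleftrightarrow>
     (\<exists>d. (\<forall>j\<in>{1..m}. ((\<lambda>s. F (t(j := s))) has_real_derivative d j) (at (t j))) \<and> (\<Sum>j=1..m. d j) = D)"

lemma has_partials_sum_const: "has_partials_sum m (\<lambda>u. c) 0 t"
  unfolding has_partials_sum_def by (intro exI[of _ "\<lambda>_. 0"]) simp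

lemma fun_upd_has_real_derivative:
  "((\<lambda>s. (t(j := s)) k) has_real_derivative (if j = k then 1 else 0)) (at x)"
  by (cases "j = k") simp_all

lemma has_partials_sum_coordinate:
  assumes "k \<in> {1..m}"
  shows "has_partials_sum m (\<lambda>u. u k) 1 t"
  unfolding has_partials_sum_def using assms
  by (intro exI[of _ "\<lambda>j. if j = k then 1 else 0"] conjI ballI fun_upd_has_real_derivative) simp

lemma has_partials_sum_compose:
  assumes "(f has_real_derivative f') (at (F t))" and "has_partials_sum m F D t" and "D' = f' * D"
  shows "has_partials_sum m (\<lambda>u. f (F u)) D' t"
proof -
  obtain d where d: "\<forall>j\<in>{1..m}. ((\<lambda>s. F (t(j := s))) has_real_derivative d j) (at (t j))"
    and D: "(\<Sum>j=1..m. d j) = D"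
    using assms(2) unfolding has_partials_sum_def by blast
  have "((\<lambda>s. f (F (t(j := s)))) has_real_derivative f' * d j) (at (t j))" if "j \<in> {1..m}" for j
    using DERIV_chain2[OF _ d[rule_format, OF that]] assms(1) by (simp add: mult.commute)
  then show ?thesis
    unfolding has_partials_sum_def using D assms(3) by (intro exI[of _ "\<lambda>j. f' * d j"]) (simp flip: sum_distrib_left)
qed

lemma has_partials_sum_mult:
  assumes "has_partials_sum m F D t" and "has_partials_sum m G E t"
  shows "has_partials_sum m (\<lambda>u. F u * G u) (D * G t + F t * E) t"
proof -
  obtain d e where d: "\<forall>j\<in>{1..m}. ((\<lambda>s. F (t(j := s))) has_real_derivative d j) (at (t j))"
    and e: "\<forall>j\<in>{1..m}. ((\<lambda>s. G (t(j := s))) has_real_derivative e j) (at (t j))"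
    and "(\<Sum>j=1..m. d j) = D" "(\<Sum>j=1..m. e j) = E"
    using assms unfolding has_partials_sum_def by blast
  moreover have "((\<lambda>s. F (t(j := s)) * G (t(j := s))) has_real_derivative d j * G t + F t * e j) (at (t j))"
    if "j \<in> {1..m}" for j
    using DERIV_mult[OF d[rule_format, OF that] e[rule_format, OF that]] by (simp add: mult.commute)
  ultimately show ?thesis
    unfolding has_partials_sum_def
    by (intro exI[of _ "\<lambda>j. d j * G t + F t * e j"]) (simp add: sum.distrib flip: sum_distrib_left sum_distrib_right)
qed

lemma has_partials_sum_divide:
  assumes "has_partials_sum m F D t" and "has_partials_sum m G E t" and "G t \<noteq> 0"
    and "D' = (D * G t - F t * E) / (G t * G t)"
  shows "has_partials_sum m (\<lambda>u. F u / G u) D' t"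
proof -
  obtain d e where d: "\<forall>j\<in>{1..m}. ((\<lambda>s. F (t(j := s))) has_real_derivative d j) (at (t j))"
    and e: "\<forall>j\<in>{1..m}. ((\<lambda>s. G (t(j := s))) has_real_derivative e j) (at (t j))"
    and "(\<Sum>j=1..m. d j) = D" "(\<Sum>j=1..m. e j) = E"
    using assms unfolding has_partials_sum_def by blast
  moreover have "((\<lambda>s. F (t(j := s)) / G (t(j := s))) has_real_derivative
      (d j * G t - F t * e j) / (G t * G t)) (at (t j))" if "j \<in> {1..m}" for j
    using DERIV_divide[OF d[rule_format, OF that] e[rule_format, OF that]] assms(3) by simp
  ultimately show ?thesis
    unfolding has_partials_sum_def using assms(4)
    by (intro exI[of _ "\<lambda>j. (d j * G t - F t * e j) / (G t * G t)"])
      (simp add: sum_subtractf flip: sum_divide_distrib sum_distrib_left sum_distrib_right)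
qed

lemma OP_derivatives_all_nodes:
  assumes adm: "admissible m \<omega> t"
  obtains P' :: "nat \<Rightarrow> real poly"
  where "\<And>j. j \<in> {1..m} \<Longrightarrow> \<forall>i\<ge>N. coeff (P' j) i = 0"
    and "\<And>j q. j \<in> {1..m} \<Longrightarrow> \<forall>i\<ge>N. coeff q i = 0 \<Longrightarrow>
           weight_functional m \<omega> t (P' j * q) = \<omega> j * exp (- ((t j)\<^sup>2)) * poly (OP m \<omega> t N * q) (t j)"
    and "\<And>j k. j \<in> {1..m} \<Longrightarrow>
           ((\<lambda>s. poly (OP m \<omega> (t(j := s)) N) ((t(j := s)) k)) has_real_derivative
              poly (P' j) (t k) + (if j = k then poly (pderiv (OP m \<omega> t N)) (t k) else 0)) (at (t j))"
proof -
  let ?P = "OP m \<omega> t N"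
  let ?node_deriv = "\<lambda>j P'. (\<forall>i\<ge>N. coeff P' i = 0) \<and>
      (\<forall>q. (\<forall>i\<ge>N. coeff q i = 0) \<longrightarrow>
         weight_functional m \<omega> t (P' * q) = \<omega> j * exp (- ((t j)\<^sup>2)) * poly (?P * q) (t j)) \<and>
      (\<forall>k. ((\<lambda>s. poly (OP m \<omega> (t(j := s)) N) ((t(j := s)) k)) has_real_derivative
         poly P' (t k) + (if j = k then poly (pderiv ?P) (t k) else 0)) (at (t j)))"
  have "\<forall>j\<in>{1..m}. \<exists>P'. ?node_deriv j P'"
  proof
    fix j assume j: "j \<in> {1..m}"
    obtain P' where low: "\<forall>i\<ge>N. coeff P' i = 0"
      and orth: "\<And>q. \<forall>i\<ge>N. coeff q i = 0 \<Longrightarrow>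
           weight_functional m \<omega> t (P' * q) = \<omega> j * exp (- ((t j)\<^sup>2)) * poly (?P * q) (t j)"
      and chain: "\<And>g g'. (g has_real_derivative g') (at (t j)) \<Longrightarrow>
           ((\<lambda>s. poly (OP m \<omega> (t(j := s)) N) (g s)) has_real_derivative
              poly P' (g (t j)) + poly (pderiv ?P) (g (t j)) * g') (at (t j))"
      and "((\<lambda>s. hn m \<omega> (t(j := s)) N) has_real_derivative
              - (\<omega> j * exp (- ((t j)\<^sup>2)) * poly ?P (t j) ^ 2)) (at (t j))"
      by (rule OP_derivative_node[OF adm j, where N = N]) blast
    have "((\<lambda>s. poly (OP m \<omega> (t(j := s)) N) ((t(j := s)) k)) has_real_derivative
         poly P' (t k) + (if j = k then poly (pderiv ?P) (t k) else 0)) (at (t j))" for k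
      using chain[OF fun_upd_has_real_derivative[of t j k]] by (cases "j = k") simp_all
    with low orth show "\<exists>P'. ?node_deriv j P'"
      by blast
  qed
  then obtain P' where "\<forall>j\<in>{1..m}. ?node_deriv j (P' j)"
    by (rule bchoice[THEN exE])
  then show thesis
    using that by blast
qed

lemma OP_partials_sum:
  assumes adm: "admissible m \<omega> t"
  obtains D where "\<forall>i\<ge>N. coeff D i = 0"
    and "\<And>q. \<forall>i\<ge>N. coeff q i = 0 \<Longrightarrow>
           weight_functional m \<omega> t (D * q) = node_sum m \<omega> t (OP m \<omega> t N * q)"
    and "\<And>k. k \<in> {1..m} \<Longrightarrow>
           has_partials_sum m (\<lambda>u. poly (OP m \<omega> u N) (u k)) (poly (D + pderiv (OP m \<omega> t N)) (t k)) t"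
proof -
  let ?P = "OP m \<omega> t N"
  obtain P' where low: "\<And>j. j \<in> {1..m} \<Longrightarrow> \<forall>i\<ge>N. coeff (P' j) i = 0"
    and orth: "\<And>j q. j \<in> {1..m} \<Longrightarrow> \<forall>i\<ge>N. coeff q i = 0 \<Longrightarrow>
           weight_functional m \<omega> t (P' j * q) = \<omega> j * exp (- ((t j)\<^sup>2)) * poly (?P * q) (t j)"
    and deriv: "\<And>j k. j \<in> {1..m} \<Longrightarrow>
           ((\<lambda>s. poly (OP m \<omega> (t(j := s)) N) ((t(j := s)) k)) has_real_derivative
              poly (P' j) (t k) + (if j = k then poly (pderiv ?P) (t k) else 0)) (at (t j))"
    using OP_derivatives_all_nodes[OF adm] by blast
  show ?thesis
  proof (rule that[of "\<Sum>j=1..m. P' j"])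
    show "\<forall>i\<ge>N. coeff (\<Sum>j=1..m. P' j) i = 0"
      using low by (simp add: coeff_sum)
    show "weight_functional m \<omega> t ((\<Sum>j=1..m. P' j) * q) = node_sum m \<omega> t (?P * q)"
      if "\<forall>i\<ge>N. coeff q i = 0" for q
      unfolding sum_distrib_right weight_functional.sum node_sum_def using orth[OF _ that]
      by (intro sum.cong) auto
    show "has_partials_sum m (\<lambda>u. poly (OP m \<omega> u N) (u k)) (poly ((\<Sum>j=1..m. P' j) + pderiv ?P) (t k)) t"
      if "k \<in> {1..m}" for k
      unfolding has_partials_sum_def
    proof (intro exI[of _ "\<lambda>j. poly (P' j) (t k) + (if j = k then poly (pderiv ?P) (t k) else 0)"] conjI)
      show "(\<Sum>j=1..m. poly (P' j) (t k) + (if j = k then poly (pderiv ?P) (t k) else 0))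
          = poly ((\<Sum>j=1..m. P' j) + pderiv ?P) (t k)"
        using that by (simp add: sum.distrib poly_sum)
    qed (use deriv in blast)
  qed
qed

lemma hn_partials_sum:
  assumes adm: "admissible m \<omega> t"
  shows "has_partials_sum m (\<lambda>u. hn m \<omega> u N) (- node_sum m \<omega> t (OP m \<omega> t N * OP m \<omega> t N)) t"
  unfolding has_partials_sum_def
proof (intro exI[of _ "\<lambda>j. - (\<omega> j * exp (- ((t j)\<^sup>2)) * poly (OP m \<omega> t N) (t j) ^ 2)"] conjI ballI)
  fix j assume "j \<in> {1..m}"
  then show "((\<lambda>s. hn m \<omega> (t(j := s)) N) has_real_derivative
      - (\<omega> j * exp (- ((t j)\<^sup>2)) * poly (OP m \<omega> t N) (t j) ^ 2)) (at (t j))"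
    by (rule OP_derivative_node[OF adm, where N = N])
qed (simp add: node_sum_def sum_negf power2_eq_square)

lemma partials_sum_OP_Suc_at_node:
  assumes adm: "admissible m \<omega> t" and k: "k \<in> {1..m}"
  shows "has_partials_sum m (\<lambda>u. poly (OP m \<omega> u (Suc N)) (u k))
           (2 * hn m \<omega> t (Suc N) / hn m \<omega> t N * poly (OP m \<omega> t N) (t k)) t"
proof -
  interpret pearson_functional "weight_functional m \<omega> t" "node_sum m \<omega> t"
    by (rule admissible_pearson[OF adm])
  obtain D where low: "\<forall>i\<ge>Suc N. coeff D i = 0"
    and orth: "\<And>q. \<forall>i\<ge>Suc N. coeff q i = 0 \<Longrightarrow>
           weight_functional m \<omega> t (D * q) = node_sum m \<omega> t (OP m \<omega> t (Suc N) * q)"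
    and partials: "\<And>k. k \<in> {1..m} \<Longrightarrow> has_partials_sum m (\<lambda>u. poly (OP m \<omega> u (Suc N)) (u k))
           (poly (D + pderiv (OP m \<omega> t (Suc N))) (t k)) t"
    by (rule OP_partials_sum[OF adm, where N = "Suc N"]) blast
  have "D + pderiv (OP m \<omega> t (Suc N)) = smult (2 * hn m \<omega> t (Suc N) / hn m \<omega> t N) (OP m \<omega> t N)"
    using sum_derivatives_next[OF low] orth
    by (simp add: OP_eq_gram_schmidt[OF adm] hn_eq_weight_functional)
  with partials[OF k] show ?thesis
    by simp
qed

lemma partials_sum_OP_at_node:
  assumes adm: "admissible m \<omega> t" and k: "k \<in> {1..m}"
  shows "has_partials_sum m (\<lambda>u. poly (OP m \<omega> u N) (u k))
           (2 * (t k * poly (OP m \<omega> t N) (t k) - poly (OP m \<omega> t (Suc N)) (t k))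
            - node_sum m \<omega> t (OP m \<omega> t N * OP m \<omega> t N) / hn m \<omega> t N * poly (OP m \<omega> t N) (t k)) t"
proof -
  interpret pearson_functional "weight_functional m \<omega> t" "node_sum m \<omega> t"
    by (rule admissible_pearson[OF adm])
  obtain D where low: "\<forall>i\<ge>N. coeff D i = 0"
    and orth: "\<And>q. \<forall>i\<ge>N. coeff q i = 0 \<Longrightarrow>
           weight_functional m \<omega> t (D * q) = node_sum m \<omega> t (OP m \<omega> t N * q)"
    and partials: "\<And>k. k \<in> {1..m} \<Longrightarrow> has_partials_sum m (\<lambda>u. poly (OP m \<omega> u N) (u k))
           (poly (D + pderiv (OP m \<omega> t N)) (t k)) t"
    by (rule OP_partials_sum[OF adm, where N = N]) blast
  have "D + pderiv (OP m \<omega> t N) = smult 2 (pCons 0 (OP m \<omega> t N) - OP m \<omega> t (Suc N))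
      - smult (node_sum m \<omega> t (OP m \<omega> t N * OP m \<omega> t N) / hn m \<omega> t N) (OP m \<omega> t N)"
    using sum_derivatives_prev[OF low] orth
    by (simp add: OP_eq_gram_schmidt[OF adm] hn_eq_weight_functional)
  with partials[OF k] show ?thesis
    by simp
qed

lemma sum_Rnk: "(\<Sum>j=1..m. Rnk m \<omega> t n j) = node_sum m \<omega> t (OP m \<omega> t n * OP m \<omega> t n) / hn m \<omega> t n"
  by (simp add: Rnk_def node_sum_def sum_divide_distrib power2_eq_square mult_ac)

lemma sum_rnk:
  "(\<Sum>j=1..m. rnk m \<omega> t n j) = node_sum m \<omega> t (OP m \<omega> t n * OP m \<omega> t (n - 1)) / hn m \<omega> t (n - 1)"
  by (simp add: rnk_def node_sum_def sum_divide_distrib mult_ac)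

lemma partials_sum_exp_node:
  assumes "k \<in> {1..m}"
  shows "has_partials_sum m (\<lambda>u. exp (- ((u k)\<^sup>2))) (- 2 * t k * exp (- ((t k)\<^sup>2))) t"
  by (rule has_partials_sum_compose[OF _ has_partials_sum_coordinate[OF assms]])
    (auto intro!: derivative_eq_intros)

lemma Rnk_partials_sum:
  assumes adm: "admissible m \<omega> t" and k: "k \<in> {1..m}"
  shows "has_partials_sum m (\<lambda>u. Rnk m \<omega> u (Suc N) k)
    (((\<Sum>j=1..m. Rnk m \<omega> t (Suc N) j) - 2 * t k) * Rnk m \<omega> t (Suc N) k + 4 * rnk m \<omega> t (Suc N) k) t"
proof -
  have "has_partials_sum m (\<lambda>u. poly (OP m \<omega> u (Suc N)) (u k) ^ 2)
      (2 * poly (OP m \<omega> t (Suc N)) (t k) * (2 * hn m \<omega> t (Suc N) / hn m \<omega> t N * poly (OP m \<omega> t N) (t k))) t"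
    by (rule has_partials_sum_compose[OF _ partials_sum_OP_Suc_at_node[OF adm k]])
      (auto intro!: derivative_eq_intros)
  moreover have "hn m \<omega> t (Suc N) \<noteq> 0" "hn m \<omega> t N \<noteq> 0"
    using hn_pos[OF adm] by (metis less_irrefl)+
  ultimately show ?thesis
    unfolding sum_Rnk unfolding Rnk_def rnk_def diff_Suc_1
    by (intro has_partials_sum_divide[OF has_partials_sum_mult[OF
          has_partials_sum_mult[OF has_partials_sum_const partials_sum_exp_node[OF k]]] hn_partials_sum[OF adm]])
      (auto simp: field_simps power2_eq_square)
qed

lemma rnk_partials_sum:
  assumes adm: "admissible m \<omega> t" and k: "k \<in> {1..m}" and R: "Rnk m \<omega> t (Suc N) k \<noteq> 0"
  shows "has_partials_sum m (\<lambda>u. rnk m \<omega> u (Suc N) k)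
    (2 * (rnk m \<omega> t (Suc N) k)\<^sup>2 / Rnk m \<omega> t (Suc N) k
      - ((\<Sum>j=1..m. rnk m \<omega> t (Suc N) j) + real (Suc N)) * Rnk m \<omega> t (Suc N) k) t"
proof -
  interpret pearson_functional "weight_functional m \<omega> t" "node_sum m \<omega> t"
    by (rule admissible_pearson[OF adm])
  have sum: "(\<Sum>j=1..m. rnk m \<omega> t (Suc N) j) = (2 * hn m \<omega> t (Suc N) - real (Suc N) * hn m \<omega> t N) / hn m \<omega> t N"
    unfolding sum_rnk diff_Suc_1 using node_mult_next[of N]
    by (simp add: OP_eq_gram_schmidt[OF adm] hn_eq_weight_functional)
  have "hn m \<omega> t (Suc N) \<noteq> 0" "hn m \<omega> t N \<noteq> 0"
    using hn_pos[OF adm] by (metis less_irrefl)+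
  moreover have "\<omega> k \<noteq> 0" "poly (OP m \<omega> t (Suc N)) (t k) \<noteq> 0"
    using R by (auto simp: Rnk_def)
  ultimately show ?thesis
    unfolding sum unfolding rnk_def Rnk_def diff_Suc_1
    by (intro has_partials_sum_divide[OF has_partials_sum_mult[OF
          has_partials_sum_mult[OF has_partials_sum_mult[OF has_partials_sum_const partials_sum_exp_node[OF k]]
          partials_sum_OP_Suc_at_node[OF adm k]] partials_sum_OP_at_node[OF adm k]] hn_partials_sum[OF adm]])
      (auto simp: field_simps power2_eq_square)
qed

theorem lemma3p5:
  fixes m n k :: nat and \<omega> t :: "nat \<Rightarrow> real"
  assumes "m \<ge> 1"
    and "\<forall>i j. 1 \<le> i \<longrightarrow> i < j \<longrightarrow> j \<le> m \<longrightarrow> t i < t j"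
    and "\<forall>l\<le>m. (\<Sum>k=0..l. \<omega> k) \<ge> 0"
    and "\<exists>x. weight m \<omega> t x \<noteq> 0"
    and "n \<ge> 1"
    and "k \<in> {1..m}"
  shows "(\<exists>D. (\<forall>j\<in>{1..m}. ((\<lambda>s. Rnk m \<omega> (t(j := s)) n k) has_real_derivative D j) (at (t j)))
             \<and> (\<Sum>j=1..m. D j) = ((\<Sum>j=1..m. Rnk m \<omega> t n j) - 2 * t k) * Rnk m \<omega> t n k
                                  + 4 * rnk m \<omega> t n k)
       \<and> (Rnk m \<omega> t n k \<noteq> 0 \<longrightarrow>
          (\<exists>D. (\<forall>j\<in>{1..m}. ((\<lambda>s. rnk m \<omega> (t(j := s)) n k) has_real_derivative D j) (at (t j)))
             \<and> (\<Sum>j=1..m. D j) = 2 * (rnk m \<omega> t n k)^2 / Rnk m \<omega> t n k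
                   - ((\<Sum>j=1..m. rnk m \<omega> t n j) + real n) * Rnk m \<omega> t n k))"
proof -
  have adm: "admissible m \<omega> t"
    using assms(2-4) by (simp add: admissible_def)
  obtain N where n: "n = Suc N"
    using assms(5) by (cases n) auto
  show ?thesis
    using Rnk_partials_sum[OF adm assms(6)] rnk_partials_sum[OF adm assms(6)]
    unfolding has_partials_sum_def n by blast
qed

end
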